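(* Let $q\in(0,1)$ and let $\omega_{i,j}$ ($i,j\ge1$) be i.i.d. with $P(\omega_{i,j}=k)=(1-q)q^k$, $k=0,1,2,\dots$. Fix $N\ge1$ and $x=(x_1,\dots,x_N)\in\mathbb{W}_N=\{x\in\mathbb{Z}^N:x_1\le x_2\le\cdots\le x_N\}$. Define $G(0,n)=x_n$, $G(m,0)=0$ for $m\ge0$, and recursively $G(m,n)=\max\{G(m-1,n),G(m,n-1)\}+\omega_{m,n}$ for $m,n\ge1$, and let $G(m)=(G(m,1),\dots,G(m,N))$. Then for every integer $m\ge1$ and $y\in\mathbb{W}_N$, $$P(G(m)=y\mid G(0)=x)=\det\big[F_{i-j}(\tilde y_{N+1-i}-\tilde x_{N+1-j})\big]_{i,j=1}^N,$$ where $\tilde x_j=-x_j-j$ and $\tilde y_j=-y_j-j$.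
   Context: $w_m(x)=\binom{x+m-1}{m-1}q^x(1-q)^m\mathbf{1}_{x\ge0}$ is the $m$-step distribution of a random walk with $\mathrm{Geom}(1-q)$ steps. $\nabla f(x)=f(x+1)-f(x)$ with inverse $\nabla^{-1}f(x)=\sum_{y<x}f(y)$; for $n\in\mathbb{Z}$, $H_n=\nabla^n w_m$ and $F_n(x)=H_{-n}(n-x)$. Equivalently $H_n(x)=\frac{(-1)^{n-1}}{2\pi\mathbf{i}}\oint_{|z|=r>1}\frac{z^n(1-z)^{m+x-1}}{(1-\frac{z}{1-q})^m}dz$. It is known (Johansson) that $P(G(m)=y\mid G(0)=x)=\det[\nabla^{j-i}w_m(y_j-x_i)]$.
   Formalization: The boundary condition G(m,0)=0 is replaced by a boundary at minus infinity, so $G(m,1)=G(m-1,1)+\omega_{m,1}$ for $m\ge1$. The statement above fails without it. *)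

theory Defs
  imports "HOL-Probability.Probability" "Jordan_Normal_Form.Determinant"
begin

text \<open>The m-step distribution of a random walk with Geom(1-q) steps.\<close>
definition w :: "real \<Rightarrow> nat \<Rightarrow> int \<Rightarrow> real" where
  "w q m x = (if x \<ge> 0 then real ((nat x + m - 1) choose (m - 1)) * q ^ nat x * (1 - q) ^ m else 0)"

definition nabla :: "(int \<Rightarrow> real) \<Rightarrow> int \<Rightarrow> real" where
  "nabla f x = f (x + 1) - f x"

definition nabla_inv :: "(int \<Rightarrow> real) \<Rightarrow> int \<Rightarrow> real" where
  "nabla_inv f x = (\<Sum>\<^sub>\<infinity> y\<in>{..<x}. f y)"

definition H :: "real \<Rightarrow> nat \<Rightarrow> int \<Rightarrow> int \<Rightarrow> real" where
  "H q m n = (if n \<ge> 0 then (nabla ^^ nat n) (w q m) else (nabla_inv ^^ nat (- n)) (w q m))"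

definition F :: "real \<Rightarrow> nat \<Rightarrow> int \<Rightarrow> int \<Rightarrow> real" where
  "F q m n x = H q m (- n) (n - x)"

text \<open>G(0,n) = x_n; G(m,n) = max(G(m-1,n), G(m,n-1)) + omega(m,n) for n >= 2 and
  G(m,1) = G(m-1,1) + omega(m,1) (boundary column G(m,0) acting as -infinity).  The value at (Suc m, 0) is irrelevant.\<close>
fun LPP :: "(nat \<times> nat \<Rightarrow> nat) \<Rightarrow> (nat \<Rightarrow> int) \<Rightarrow> nat \<Rightarrow> nat \<Rightarrow> int" where
  "LPP \<omega> x 0 n = x n"
| "LPP \<omega> x (Suc m) 0 = 0"
| "LPP \<omega> x (Suc m) (Suc n) =
     (if n = 0 then LPP \<omega> x m 1 else max (LPP \<omega> x m (Suc n)) (LPP \<omega> x (Suc m) n))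
     + int (\<omega> (Suc m, Suc n))"

definition weyl :: "nat \<Rightarrow> (nat \<Rightarrow> int) \<Rightarrow> bool" where
  "weyl N x \<longleftrightarrow> (\<forall>i j. 1 \<le> i \<longrightarrow> i \<le> j \<longrightarrow> j \<le> N \<longrightarrow> x i \<le> x j)"

definition tilde :: "(nat \<Rightarrow> int) \<Rightarrow> nat \<Rightarrow> int" where
  "tilde x j = - x j - int j"

text \<open>i.i.d. weights P(omega = k) = (1-q) q^k on the box {1..m} x {1..N}
  (the event G(m) = y only depends on these weights).\<close>
definition weights :: "real \<Rightarrow> nat \<Rightarrow> nat \<Rightarrow> (nat \<times> nat \<Rightarrow> nat) pmf" where
  "weights q m N = Pi_pmf ({1..m} \<times> {1..N}) 0 (\<lambda>_. geometric_pmf (1 - q))"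

end

theory Submission
  imports Defs
begin

text \<open>Row \<open>m\<close> of the last passage field is a Markov chain: given row \<open>m = z\<close>, row \<open>m + 1\<close> equals
  \<open>y\<close> iff \<open>\<omega>(m + 1, n) = y\<^sub>n - max z\<^sub>n y\<^sub>n\<^sub>-\<^sub>1\<close> for all \<open>n\<close>, so the one-step kernel is a product of
  geometric masses \<open>(1 - q) q\<^sup>k\<close>. By induction on \<open>m\<close> the transition probability is
  \<open>det [nabla\<^sup>i\<^sup>-\<^sup>j w\<^sub>m (y\<^sub>i - x\<^sub>j)]\<close>; for \<open>m = 0\<close> expansion along the last row or column
  reduces it to the indicator of \<open>y = x\<close>.
  In the induction step the kernel is summed against the determinant one coordinate at a
  time. Consecutive rows are differences of each other, so summation by parts and row
  operations turn every row into its convolution with one geometric step, and this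
  convolution, which commutes with \<open>nabla\<close> and its inverse, maps \<open>w\<^sub>m\<close> to \<open>w\<^sub>m\<^sub>+\<^sub>1\<close>.
  The stated form with \<open>F\<close> and the reflected coordinates is the same determinant with rows
  and columns reversed.\<close>

section \<open>Difference operators\<close>

definition vanishes_below :: "(int \<Rightarrow> real) \<Rightarrow> int \<Rightarrow> bool" where
  "vanishes_below f L \<longleftrightarrow> (\<forall>t<L. f t = 0)"

lemma vanishes_belowD: "vanishes_below f L \<Longrightarrow> t < L \<Longrightarrow> f t = 0"
  by (simp add: vanishes_below_def)

lemma vanishes_below_mono: "vanishes_below f L \<Longrightarrow> L' \<le> L \<Longrightarrow> vanishes_below f L'"
  by (simp add: vanishes_below_def)

lemma nabla_inv_eq_sum:
  assumes "vanishes_below f L"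
  shows "nabla_inv f t = (\<Sum>u\<in>{L..<t}. f u)"
proof -
  have "nabla_inv f t = infsum f {L..<t}"
    unfolding nabla_inv_def
    by (rule infsum_cong_neutral) (use assms in \<open>auto simp: vanishes_below_def\<close>)
  then show ?thesis by simp
qed

lemma nabla_inv_add_one:
  assumes "vanishes_below f L"
  shows "nabla_inv f (t + 1) = nabla_inv f t + f t"
proof (cases "t < L")
  case True
  then show ?thesis using assms by (simp add: nabla_inv_eq_sum vanishes_below_def)
next
  case False
  then have "{L..<t + 1} = insert t {L..<t}" by auto
  then show ?thesis using assms by (simp add: nabla_inv_eq_sum add.commute)
qed

lemma vanishes_below_nabla_inv: "vanishes_below f L \<Longrightarrow> vanishes_below (nabla_inv f) L"
  by (simp add: vanishes_below_def nabla_inv_eq_sum)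

lemma vanishes_below_nabla: "vanishes_below f L \<Longrightarrow> vanishes_below (nabla f) (L - 1)"
  by (simp add: vanishes_below_def nabla_def)

lemma nabla_nabla_inv: "vanishes_below f L \<Longrightarrow> nabla (nabla_inv f) = f"
  by (simp add: fun_eq_iff nabla_def nabla_inv_add_one)

definition nabla_pow :: "(int \<Rightarrow> real) \<Rightarrow> int \<Rightarrow> int \<Rightarrow> real" where
  "nabla_pow f n = (if n \<ge> 0 then (nabla ^^ nat n) f else (nabla_inv ^^ nat (- n)) f)"

lemma H_eq_nabla_pow: "H q m = nabla_pow (w q m)"
  by (simp add: H_def nabla_pow_def fun_eq_iff)

lemma nabla_pow_0 [simp]: "nabla_pow f 0 = f"
  by (simp add: nabla_pow_def)

lemma nabla_pow_of_nat: "nabla_pow f (int j) = (nabla ^^ j) f"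
  by (simp add: nabla_pow_def)

lemma nabla_pow_minus_of_nat: "nabla_pow f (- int j) = (nabla_inv ^^ j) f"
  by (cases "j = 0") (simp_all add: nabla_pow_def)

lemma vanishes_below_nabla_pow:
  assumes "vanishes_below f 0"
  shows "vanishes_below (nabla_pow f k) (min 0 (- k))"
proof (cases "k \<ge> 0")
  case True
  have "vanishes_below ((nabla ^^ j) f) (- int j)" for j
  proof (induction j)
    case (Suc j)
    then show ?case using vanishes_below_nabla[OF Suc.IH] by (simp add: vanishes_below_def)
  qed (use assms in simp)
  from this[of "nat k"] show ?thesis using True by (simp add: nabla_pow_def)
next
  case False
  have "vanishes_below ((nabla_inv ^^ j) f) 0" for j
    by (induction j) (use assms in \<open>auto dest: vanishes_below_nabla_inv\<close>)
  from this[of "nat (- k)"] show ?thesis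
    using False by (auto simp: nabla_pow_def intro: vanishes_below_mono)
qed

lemma nabla_pow_minus_one: "k \<le> 0 \<Longrightarrow> nabla_pow f (k - 1) = nabla_inv (nabla_pow f k)"
  using nabla_pow_minus_of_nat[of f "Suc (nat (- k))"] nabla_pow_minus_of_nat[of f "nat (- k)"]
  by simp

lemma nabla_pow_add_one:
  assumes "vanishes_below f 0"
  shows "nabla_pow f (k + 1) = nabla (nabla_pow f k)"
proof (cases "k \<ge> 0")
  case True
  then have "nat (k + 1) = Suc (nat k)" by simp
  then show ?thesis using True by (simp add: nabla_pow_def)
next
  case False
  then have "nabla_pow f k = nabla_inv (nabla_pow f (k + 1))"
    using nabla_pow_minus_one[of "k + 1" f] by simp
  then show ?thesis
    using nabla_nabla_inv[OF vanishes_below_nabla_pow[OF assms, of "k + 1"]] by simp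
qed

lemma nabla_pow_neg_eq_0_nonpos:
  assumes "vanishes_below f 0" "k < 0" "t \<le> 0"
  shows "nabla_pow f k t = 0"
proof -
  have "nabla_pow f k = nabla_inv (nabla_pow f (k + 1))"
    using assms(2) nabla_pow_minus_one[of "k + 1" f] by simp
  then show ?thesis
    using assms vanishes_below_nabla_pow[OF assms(1), of "k + 1"] by (simp add: nabla_inv_eq_sum)
qed

lemma nabla_pow_nonneg_eq_0_pos:
  assumes "\<And>t. 0 < t \<Longrightarrow> f t = 0" "0 \<le> k" "0 < t"
  shows "nabla_pow f k t = 0"
proof -
  have "(nabla ^^ j) f t = 0" if "0 < t" for j t
    using that by (induction j arbitrary: t) (auto simp: assms(1) nabla_def)
  then show ?thesis using assms(2,3) by (simp add: nabla_pow_def)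
qed

section \<open>Geometric smoothing\<close>

text \<open>Since \<open>(1 - q) q\<^sup>k\<close> is the \<open>Geom(1 - q)\<close> mass, a left-supported \<open>g\<close> with
  this recurrence is \<open>f\<close> convolved with one more step of the walk.\<close>
definition geom_recurrence :: "real \<Rightarrow> (int \<Rightarrow> real) \<Rightarrow> (int \<Rightarrow> real) \<Rightarrow> bool" where
  "geom_recurrence q f g \<longleftrightarrow> (\<forall>t. g t = q * g (t - 1) + (1 - q) * f t)"

lemma geom_recurrence_nabla:
  "geom_recurrence q f g \<Longrightarrow> geom_recurrence q (nabla f) (nabla g)"
  unfolding geom_recurrence_def nabla_def
proof
  assume rec: "\<forall>t. g t = q * g (t - 1) + (1 - q) * f t"
  fix t
  have "g (t + 1) = q * g t + (1 - q) * f (t + 1)" "g t = q * g (t - 1) + (1 - q) * f t"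
    using rec[rule_format, of "t + 1"] rec[rule_format, of t] by simp_all
  then show "g (t + 1) - g t = q * (g (t - 1 + 1) - g (t - 1)) + (1 - q) * (f (t + 1) - f t)"
    by (simp only: diff_add_cancel right_diff_distrib)
qed

lemma geom_recurrence_nabla_inv:
  assumes f: "vanishes_below f L" and g: "vanishes_below g L"
    and rec: "geom_recurrence q f g"
  shows "geom_recurrence q (nabla_inv f) (nabla_inv g)"
  unfolding geom_recurrence_def
proof
  fix t
  have shift: "(\<Sum>u\<in>{L..<t}. g (u - 1)) = (\<Sum>u\<in>{L - 1..<t - 1}. g u)"
    by (rule sum.reindex_bij_witness[of _ "\<lambda>u. u + 1" "\<lambda>u. u - 1"]) auto
  have "nabla_inv g t = (\<Sum>u\<in>{L..<t}. q * g (u - 1) + (1 - q) * f u)"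
    unfolding nabla_inv_eq_sum[OF g]
    by (intro sum.cong refl) (rule rec[unfolded geom_recurrence_def, rule_format])
  also have "\<dots> = q * (\<Sum>u\<in>{L..<t}. g (u - 1)) + (1 - q) * (\<Sum>u\<in>{L..<t}. f u)"
    by (simp add: sum.distrib sum_distrib_left)
  also have "\<dots> = q * nabla_inv g (t - 1) + (1 - q) * nabla_inv f t"
    using shift nabla_inv_eq_sum[OF vanishes_below_mono[OF g, of "L - 1"]] nabla_inv_eq_sum[OF f]
    by simp
  finally show "nabla_inv g t = q * nabla_inv g (t - 1) + (1 - q) * nabla_inv f t" .
qed

lemma geom_recurrence_nabla_pow:
  assumes f: "vanishes_below f 0" and g: "vanishes_below g 0"
    and rec: "geom_recurrence q f g"
  shows "geom_recurrence q (nabla_pow f k) (nabla_pow g k)"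
proof (cases "k \<ge> 0")
  case True
  have "geom_recurrence q ((nabla ^^ j) f) ((nabla ^^ j) g)" for j
    by (induction j) (simp_all add: rec geom_recurrence_nabla)
  then show ?thesis using True nabla_pow_of_nat[of _ "nat k"] by simp
next
  case False
  have "geom_recurrence q (nabla_pow f (- int j)) (nabla_pow g (- int j))" for j
  proof (induction j)
    case (Suc j)
    have "- int (Suc j) = - int j - 1" by simp
    moreover have "- int j \<le> 0" by simp
    ultimately show ?case
      using geom_recurrence_nabla_inv[OF vanishes_below_nabla_pow[OF f] vanishes_below_nabla_pow[OF g] Suc]
      by (simp only: nabla_pow_minus_one)
  qed (simp add: rec)
  from this[of "nat (- k)"] show ?thesis using False by simp
qed

definition geom_sum :: "real \<Rightarrow> int \<Rightarrow> (int \<Rightarrow> real) \<Rightarrow> int \<Rightarrow> real" where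
  "geom_sum q L f Y = (\<Sum>u\<in>{L..Y}. q ^ nat (Y - u) * f u)"

lemma geom_sum_below: "Y < L \<Longrightarrow> geom_sum q L f Y = 0"
  by (simp add: geom_sum_def)

lemma geom_sum_add_one:
  assumes "L \<le> Y + 1"
  shows "geom_sum q L f (Y + 1) = q * geom_sum q L f Y + f (Y + 1)"
proof -
  have "(\<Sum>u\<in>{L..Y}. q ^ nat (Y + 1 - u) * f u) = q * geom_sum q L f Y"
    unfolding geom_sum_def sum_distrib_left
  proof (rule sum.cong)
    fix u assume "u \<in> {L..Y}"
    then have "nat (Y + 1 - u) = Suc (nat (Y - u))" by auto
    then show "q ^ nat (Y + 1 - u) * f u = q * (q ^ nat (Y - u) * f u)" by simp
  qed simp
  moreover have "{L..Y + 1} = insert (Y + 1) {L..Y}" using assms by auto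
  ultimately show ?thesis by (simp add: geom_sum_def add.commute)
qed

lemma geom_sum_split:
  assumes "L \<le> Y' + 1" and "Y' \<le> Y"
  shows "geom_sum q L f Y = q ^ nat (Y - Y') * geom_sum q L f Y' + geom_sum q (Y' + 1) f Y"
  using assms(2)
proof (induction Y rule: int_ge_induct)
  case base
  then show ?case by (simp add: geom_sum_below)
next
  case (step Y)
  have "nat (Y + 1 - Y') = Suc (nat (Y - Y'))" using step.hyps by simp
  then show ?case
    using step geom_sum_add_one[of L Y q f] geom_sum_add_one[of "Y' + 1" Y q f] assms(1)
    by (simp add: algebra_simps)
qed

lemma sum_int_telescope:
  fixes C :: "int \<Rightarrow> 'a::ab_group_add"
  assumes "lo \<le> Y + 1"
  shows "(\<Sum>u\<in>{lo..Y}. C (u + 1) - C u) = C (Y + 1) - C lo"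
proof -
  have "lo - 1 \<le> Y" using assms by simp
  then show ?thesis
  proof (induction Y rule: int_ge_induct)
    case (step Y)
    have "{lo..Y + 1} = insert (Y + 1) {lo..Y}" using step.hyps by auto
    then show ?case using step.IH by simp
  qed simp
qed

lemma geom_recurrence_imp_geom_sum:
  assumes rec: "geom_recurrence q f g" and g: "vanishes_below g L"
  shows "g Y = (1 - q) * geom_sum q L f Y"
proof (cases "L - 1 \<le> Y")
  case True
  then show ?thesis
  proof (induction Y rule: int_ge_induct)
    case base
    then show ?case using g by (simp add: vanishes_below_def geom_sum_below)
  next
    case (step Y)
    have "g (Y + 1) = q * g Y + (1 - q) * f (Y + 1)"
      using rec[unfolded geom_recurrence_def, rule_format, of "Y + 1"] by simp
    also have "\<dots> = (1 - q) * (q * geom_sum q L f Y + f (Y + 1))"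
      unfolding step.IH by (simp add: algebra_simps)
    also have "\<dots> = (1 - q) * geom_sum q L f (Y + 1)"
      using step.hyps by (simp add: geom_sum_add_one)
    finally show ?case .
  qed
next
  case False
  then show ?thesis using g by (simp add: vanishes_below_def geom_sum_below)
qed

lemma geom_sum_diff:
  assumes C: "vanishes_below C (L + 1)"
  shows "geom_sum q L (\<lambda>u. C (u + 1) - C u) Y = C (Y + 1) - (1 - q) * geom_sum q L C Y"
proof (cases "L - 1 \<le> Y")
  case True
  then show ?thesis
  proof (induction Y rule: int_ge_induct)
    case base
    then show ?case using C by (simp add: vanishes_below_def geom_sum_below)
  next
    case (step Y)
    let ?D = "\<lambda>u. C (u + 1) - C u"
    have "geom_sum q L ?D (Y + 1) = q * geom_sum q L ?D Y + ?D (Y + 1)"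
      using step.hyps by (simp add: geom_sum_add_one)
    also have "\<dots> = q * (C (Y + 1) - (1 - q) * geom_sum q L C Y) + (C (Y + 1 + 1) - C (Y + 1))"
      using step.IH by simp
    also have "\<dots> = C (Y + 1 + 1) - (1 - q) * (q * geom_sum q L C Y + C (Y + 1))"
      by (simp add: algebra_simps)
    also have "\<dots> = C (Y + 1 + 1) - (1 - q) * geom_sum q L C (Y + 1)"
      using step.hyps by (simp add: geom_sum_add_one)
    finally show ?case .
  qed
next
  case False
  then show ?thesis using C by (simp add: vanishes_below_def geom_sum_below)
qed

lemma sum_pow_max_diff:
  fixes C :: "int \<Rightarrow> real"
  assumes C: "vanishes_below C (L + 1)" and "L \<le> lo" "lo \<le> Y'" "Y' \<le> Y"
  shows "(\<Sum>u\<in>{lo..Y}. q ^ nat (Y - max u Y') * (C (u + 1) - C u))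
       = geom_sum q L (\<lambda>u. C (u + 1) - C u) Y + (1 - q) * q ^ nat (Y - Y') * geom_sum q L C Y'
         - q ^ nat (Y - Y') * C lo"
proof -
  let ?D = "\<lambda>u. C (u + 1) - C u"
  have "{lo..Y} = {lo..Y'} \<union> {Y' + 1..Y}" "{lo..Y'} \<inter> {Y' + 1..Y} = {}"
    using assms by auto
  then have "(\<Sum>u\<in>{lo..Y}. q ^ nat (Y - max u Y') * ?D u)
      = (\<Sum>u\<in>{lo..Y'}. q ^ nat (Y - Y') * ?D u) + geom_sum q (Y' + 1) ?D Y"
    by (simp add: sum.union_disjoint geom_sum_def)
  also have "(\<Sum>u\<in>{lo..Y'}. q ^ nat (Y - Y') * ?D u) = q ^ nat (Y - Y') * (C (Y' + 1) - C lo)"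
    using assms sum_int_telescope[of lo Y' C] by (simp add: sum_distrib_left[symmetric])
  also have "geom_sum q (Y' + 1) ?D Y
      = geom_sum q L ?D Y - q ^ nat (Y - Y') * (C (Y' + 1) - (1 - q) * geom_sum q L C Y')"
    using assms geom_sum_split[of L Y' Y q ?D] geom_sum_diff[OF C, of q Y'] by simp
  finally show ?thesis by (simp add: algebra_simps)
qed

text \<open>\<open>w q 0\<close> is not the point mass at \<open>0\<close> (its binomial coefficient degenerates to \<open>1\<close>),
  hence the separate case.\<close>
definition walk_dist :: "real \<Rightarrow> nat \<Rightarrow> int \<Rightarrow> real" where
  "walk_dist q m = (if m = 0 then indicator {0} else w q m)"

lemma vanishes_below_walk_dist: "vanishes_below (walk_dist q m) 0"
  by (auto simp: walk_dist_def vanishes_below_def w_def)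

lemma geom_recurrence_w:
  assumes "1 \<le> m"
  shows "geom_recurrence q (w q m) (w q (Suc m))"
  unfolding geom_recurrence_def
proof
  fix t
  show "w q (Suc m) t = q * w q (Suc m) (t - 1) + (1 - q) * w q m t"
  proof (cases "t < 0")
    case True
    then show ?thesis by (simp add: w_def)
  next
    case False
    then obtain n where t: "t = int n" by (metis nonneg_int_cases not_less)
    obtain k where k: "m = Suc k" using assms by (cases m) auto
    show ?thesis
    proof (cases n)
      case 0
      then show ?thesis using t k by (simp add: w_def)
    next
      case (Suc n')
      have tn: "nat t = Suc n'" "nat (t - 1) = n'" "t - 1 \<ge> 0" using t Suc by auto
      have a1: "w q (Suc m) t
          = real (Suc (Suc (n' + k)) choose Suc k) * (q * q ^ n') * ((1 - q) * (1 - q) ^ m)"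
        unfolding w_def using tn False k by simp
      have a2: "w q (Suc m) (t - 1) = real (Suc (n' + k) choose Suc k) * q ^ n' * ((1 - q) * (1 - q) ^ m)"
        unfolding w_def using tn k by simp
      have a3: "w q m t = real (Suc (n' + k) choose k) * (q * q ^ n') * (1 - q) ^ m"
        unfolding w_def using tn False k by simp
      have pascal: "real (Suc (Suc (n' + k)) choose Suc k)
          = real (Suc (n' + k) choose Suc k) + real (Suc (n' + k) choose k)"
        by simp
      show ?thesis unfolding a1 a2 a3 pascal by (simp add: algebra_simps)
    qed
  qed
qed

lemma geom_recurrence_walk_dist: "geom_recurrence q (walk_dist q m) (walk_dist q (Suc m))"
proof (cases "m = 0")
  case True
  have w1: "w q (Suc 0) t = (if 0 \<le> t then q ^ nat t * (1 - q) else 0)" for t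
    by (simp add: w_def)
  have "geom_recurrence q (indicator {0}) (w q 1)"
    unfolding geom_recurrence_def
  proof
    fix t :: int
    consider "t \<le> 0" | "0 < t" by linarith
    then show "w q 1 t = q * w q 1 (t - 1) + (1 - q) * indicator {0} t"
    proof cases
      case 2
      have "nat t = Suc (nat (t - 1))" using 2 by simp
      then have "w q (Suc 0) t = q * (q ^ nat (t - 1) * (1 - q))" using 2 by (simp add: w1)
      moreover have "w q (Suc 0) (t - 1) = q ^ nat (t - 1) * (1 - q)" using 2 by (simp add: w1)
      ultimately show ?thesis using 2 by simp
    qed (auto simp: w1)
  qed
  then show ?thesis using True by (simp add: walk_dist_def)
next
  case False
  then show ?thesis using geom_recurrence_w[of m q] by (simp add: walk_dist_def)
qed

lemma vanishes_below_nabla_pow_walk_dist: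
  "vanishes_below (\<lambda>u. nabla_pow (walk_dist q m) k (u - s)) (s + min 0 (- k))"
  unfolding vanishes_below_def
proof (intro allI impI)
  fix t assume "t < s + min 0 (- k)"
  then have "t - s < min 0 (- k)" by linarith
  then show "nabla_pow (walk_dist q m) k (t - s) = 0"
    by (rule vanishes_belowD[OF vanishes_below_nabla_pow[OF vanishes_below_walk_dist]])
qed

lemma nabla_pow_walk_dist_Suc:
  assumes "L \<le> s + min 0 (- k)"
  shows "nabla_pow (walk_dist q (Suc m)) k (Y - s)
    = (1 - q) * geom_sum q L (\<lambda>u. nabla_pow (walk_dist q m) k (u - s)) Y"
proof -
  note rec = geom_recurrence_nabla_pow[OF vanishes_below_walk_dist vanishes_below_walk_dist
      geom_recurrence_walk_dist, of q m k]
  have "geom_recurrence q (\<lambda>u. nabla_pow (walk_dist q m) k (u - s))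
      (\<lambda>u. nabla_pow (walk_dist q (Suc m)) k (u - s))"
    unfolding geom_recurrence_def
  proof
    fix u
    show "nabla_pow (walk_dist q (Suc m)) k (u - s)
        = q * nabla_pow (walk_dist q (Suc m)) k (u - 1 - s) + (1 - q) * nabla_pow (walk_dist q m) k (u - s)"
      using rec[unfolded geom_recurrence_def, rule_format, of "u - s"] by (simp add: algebra_simps)
  qed
  moreover have "vanishes_below (\<lambda>u. nabla_pow (walk_dist q (Suc m)) k (u - s)) L"
    by (rule vanishes_below_mono[OF vanishes_below_nabla_pow_walk_dist assms])
  ultimately show ?thesis by (rule geom_recurrence_imp_geom_sum)
qed

section \<open>Determinants as functions of the rows\<close>

definition det_fun :: "nat \<Rightarrow> (nat \<Rightarrow> nat \<Rightarrow> 'a::comm_ring_1) \<Rightarrow> 'a" where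
  "det_fun n A = det (mat n n (\<lambda>(i, j). A i j))"

lemma det_fun_expand:
  "det_fun n A = (\<Sum>p\<in>{p. p permutes {0..<n}}. signof p * (\<Prod>i=0..<n. A i (p i)))"
  unfolding det_fun_def
proof (subst det_def'[of _ n])
  have entries: "(\<Prod>i=0..<n. mat n n (\<lambda>(i, j). A i j) $$ (i, p i)) = (\<Prod>i=0..<n. A i (p i))"
    if "p \<in> {p. p permutes {0..<n}}" for p
    using that by (auto intro!: prod.cong dest: permutes_in_image)
  show "(\<Sum>p\<in>{p. p permutes {0..<n}}. signof p * (\<Prod>i=0..<n. mat n n (\<lambda>(i, j). A i j) $$ (i, p i)))
      = (\<Sum>p\<in>{p. p permutes {0..<n}}. signof p * (\<Prod>i=0..<n. A i (p i)))"
    by (rule sum.cong[OF refl]) (simp only: entries)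
qed simp

lemma det_fun_cong:
  assumes "\<And>i j. i < n \<Longrightarrow> j < n \<Longrightarrow> A i j = B i j"
  shows "det_fun n A = det_fun n B"
  unfolding det_fun_def by (rule arg_cong[of _ _ det]) (rule eq_matI, auto simp: assms)

lemma det_fun_update_row:
  assumes "k < n"
  shows "det_fun n (A(k := v))
    = (\<Sum>p\<in>{p. p permutes {0..<n}}. signof p * (v (p k) * (\<Prod>i\<in>{0..<n} - {k}. A i (p i))))"
  unfolding det_fun_expand
proof (rule sum.cong[OF refl])
  fix p
  have "(\<Prod>i=0..<n. (A(k := v)) i (p i)) = v (p k) * (\<Prod>i\<in>{0..<n} - {k}. (A(k := v)) i (p i))"
    using assms by (subst prod.remove[of _ k]) auto
  also have "\<dots> = v (p k) * (\<Prod>i\<in>{0..<n} - {k}. A i (p i))"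
    by (auto intro!: prod.cong)
  finally show "signof p * (\<Prod>i=0..<n. (A(k := v)) i (p i))
      = signof p * (v (p k) * (\<Prod>i\<in>{0..<n} - {k}. A i (p i)))"
    by simp
qed

lemma det_fun_row_linear:
  assumes "k < n"
  shows "det_fun n (A(k := (\<lambda>j. a * u j + b * v j))) = a * det_fun n (A(k := u)) + b * det_fun n (A(k := v))"
  unfolding det_fun_update_row[OF assms]
  by (simp add: sum_distrib_left sum.distrib[symmetric] algebra_simps)

lemma det_fun_row_scale:
  assumes "k < n"
  shows "det_fun n (A(k := (\<lambda>j. a * u j))) = a * det_fun n (A(k := u))"
  using det_fun_row_linear[OF assms, of A a u 0 u] by simp

lemma det_fun_row_sum:
  assumes "k < n"
  shows "det_fun n (A(k := (\<lambda>j. \<Sum>s\<in>S. u s j))) = (\<Sum>s\<in>S. det_fun n (A(k := u s)))"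
  unfolding det_fun_update_row[OF assms]
  by (simp add: sum_distrib_left sum_distrib_right sum.swap[of _ S] algebra_simps)

lemma det_fun_identical_rows:
  assumes "k < n" "l < n" "k \<noteq> l" "A k = A l"
  shows "det_fun n A = 0"
  unfolding det_fun_def by (rule det_identical_rows[of _ n k l]) (use assms in auto)

lemma det_fun_row_add:
  assumes "k < n" "l < n" "k \<noteq> l"
  shows "det_fun n (A(k := (\<lambda>j. A k j + c * A l j))) = det_fun n A"
proof -
  have "det_fun n (A(k := A l)) = 0"
    by (rule det_fun_identical_rows[of k n l]) (use assms in auto)
  then show ?thesis
    using det_fun_row_linear[OF assms(1), of A 1 "A k" c "A l"] by simp
qed

lemma det_fun_smult: "det_fun n (\<lambda>i j. c * A i j) = c ^ n * det_fun n A"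
  unfolding det_fun_expand by (simp add: prod.distrib sum_distrib_left algebra_simps)

lemma det_fun_zero_row:
  assumes "k < n" "\<And>j. j < n \<Longrightarrow> A k j = 0"
  shows "det_fun n A = 0"
proof -
  have "det_fun n A = det_fun n (A(k := (\<lambda>j. 0 * A k j)))"
    by (rule det_fun_cong) (use assms in auto)
  also have "\<dots> = 0" by (simp only: det_fun_row_scale[OF assms(1)]) simp
  finally show ?thesis .
qed

lemma det_fun_Suc_last_column:
  assumes "\<And>i. i < n \<Longrightarrow> A i n = 0"
  shows "det_fun (Suc n) A = A n n * det_fun n A"
proof -
  let ?M = "mat (Suc n) (Suc n) (\<lambda>(i, j). A i j)"
  have "det ?M = (\<Sum>i<Suc n. ?M $$ (i, n) * cofactor ?M i n)"
    by (rule laplace_expansion_column) auto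
  also have "\<dots> = ?M $$ (n, n) * cofactor ?M n n"
    by (subst sum.remove[of _ n]) (auto simp: assms intro!: sum.neutral)
  also have "mat_delete ?M n n = mat n n (\<lambda>(i, j). A i j)"
    by (rule eq_matI) (auto simp: mat_delete_def)
  then have "cofactor ?M n n = det_fun n A"
    unfolding cofactor_def det_fun_def by simp
  finally show ?thesis unfolding det_fun_def by simp
qed

lemma det_fun_reverse: "det_fun n (\<lambda>i j. A (n - 1 - i) (n - 1 - j)) = det_fun n A"
proof -
  define r where "r i = (if i < n then n - 1 - i else i)" for i
  have r_permutes: "r permutes {0..<n}"
  proof (rule bij_imp_permutes)
    have "r (r i) = i" for i by (auto simp: r_def)
    then show "bij_betw r {0..<n} {0..<n}"
      by (intro bij_betw_byWitness[where f' = r]) (auto simp: r_def)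
  qed (auto simp: r_def)
  have r_less: "i < n \<Longrightarrow> r i < n" for i by (auto simp: r_def)
  let ?M = "mat n n (\<lambda>(i, j). A i j)"
  let ?R = "\<lambda>B. mat n n (\<lambda>(i, j). B $$ (r i, j))"
  have "transpose_mat (?R (transpose_mat (?R ?M))) = mat n n (\<lambda>(i, j). A (n - 1 - i) (n - 1 - j))"
    by (rule eq_matI) (auto simp: r_less r_def)
  then have "det_fun n (\<lambda>i j. A (n - 1 - i) (n - 1 - j)) = det (?R (transpose_mat (?R ?M)))"
    unfolding det_fun_def by (metis det_transpose transpose_carrier_mat mat_carrier)
  also have "\<dots> = signof r * signof r * det ?M"
    by (simp add: det_permute_rows[OF _ r_permutes] det_transpose[of _ n])
  also have "signof r * signof r = (1 :: 'a)"
    by (simp add: sign_def)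
  finally show ?thesis unfolding det_fun_def by simp
qed

section \<open>The Markov property of last passage percolation\<close>

fun lpp_row :: "(nat \<Rightarrow> int) \<Rightarrow> (nat \<Rightarrow> nat) \<Rightarrow> nat \<Rightarrow> int" where
  "lpp_row z r 0 = 0"
| "lpp_row z r (Suc n) = (if n = 0 then z 1 else max (z (Suc n)) (lpp_row z r n)) + int (r (Suc n))"

lemma LPP_Suc: "LPP \<omega> x (Suc m) n = lpp_row (LPP \<omega> x m) (\<lambda>j. \<omega> (Suc m, j)) n"
  by (induction n) auto

lemma lpp_row_cong:
  assumes "\<And>j. 1 \<le> j \<Longrightarrow> j \<le> n \<Longrightarrow> z j = z' j \<and> r j = r' j"
  shows "lpp_row z r n = lpp_row z' r' n"
  using assms by (induction n) auto

lemma LPP_cong: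
  assumes "\<And>i j. 1 \<le> i \<Longrightarrow> i \<le> m \<Longrightarrow> 1 \<le> j \<Longrightarrow> j \<le> n \<Longrightarrow> \<omega> (i, j) = \<omega>' (i, j)"
  shows "LPP \<omega> x m n = LPP \<omega>' x m n"
  using assms
proof (induction m arbitrary: n)
  case (Suc m)
  have "lpp_row (LPP \<omega> x m) (\<lambda>j. \<omega> (Suc m, j)) n = lpp_row (LPP \<omega>' x m) (\<lambda>j. \<omega>' (Suc m, j)) n"
    by (rule lpp_row_cong) (use Suc in auto)
  then show ?case by (simp only: LPP_Suc)
qed simp

lemma lpp_row_ge: "1 \<le> n \<Longrightarrow> z n \<le> lpp_row z r n"
  by (cases n) auto

lemma LPP_ge_initial: "1 \<le> n \<Longrightarrow> x n \<le> LPP \<omega> x m n"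
proof (induction m arbitrary: n)
  case (Suc m)
  have "x n \<le> LPP \<omega> x m n" using Suc by simp
  also have "\<dots> \<le> lpp_row (LPP \<omega> x m) (\<lambda>j. \<omega> (Suc m, j)) n" using Suc.prems by (rule lpp_row_ge)
  finally show ?case by (simp only: LPP_Suc)
qed simp

lemma weylD: "weyl N x \<Longrightarrow> 1 \<le> i \<Longrightarrow> i \<le> j \<Longrightarrow> j \<le> N \<Longrightarrow> x i \<le> x j"
  by (simp add: weyl_def)

lemma weyl_LPP:
  assumes "weyl N x"
  shows "weyl N (LPP \<omega> x m)"
proof (cases m)
  case 0
  then have "LPP \<omega> x m = x" by (simp add: fun_eq_iff)
  then show ?thesis using assms by simp
next
  case (Suc m')
  show ?thesis unfolding weyl_def
  proof (intro allI impI)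
    fix i j assume ij: "1 \<le> i" "i \<le> j" "j \<le> N"
    show "LPP \<omega> x m i \<le> LPP \<omega> x m j"
      using ij(2) by (induction j rule: dec_induct) (use ij(1) Suc in auto)
  qed
qed

definition row_base :: "(nat \<Rightarrow> int) \<Rightarrow> (nat \<Rightarrow> int) \<Rightarrow> nat \<Rightarrow> int" where
  "row_base z y n = (if n = 1 then z 1 else max (z n) (y (n - 1)))"

definition row_transition :: "real \<Rightarrow> nat \<Rightarrow> (nat \<Rightarrow> int) \<Rightarrow> (nat \<Rightarrow> int) \<Rightarrow> real" where
  "row_transition q N z y =
    (\<Prod>n\<in>{1..N}. if row_base z y n \<le> y n then (1 - q) * q ^ nat (y n - row_base z y n) else 0)"

lemma lpp_row_eq_iff:
  "(\<forall>n\<in>{1..N}. lpp_row z r n = y n) \<longleftrightarrow> (\<forall>n\<in>{1..N}. int (r n) = y n - row_base z y n)"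
proof
  assume h: "\<forall>n\<in>{1..N}. lpp_row z r n = y n"
  show "\<forall>n\<in>{1..N}. int (r n) = y n - row_base z y n"
  proof
    fix n assume n: "n \<in> {1..N}"
    then obtain n' where n': "n = Suc n'" by (cases n) auto
    have "lpp_row z r n = y n" using h n by blast
    moreover have "n' \<noteq> 0 \<Longrightarrow> lpp_row z r n' = y n'" using h n n' by auto
    ultimately show "int (r n) = y n - row_base z y n"
      using n' by (cases "n' = 0") (auto simp: row_base_def)
  qed
next
  assume h: "\<forall>n\<in>{1..N}. int (r n) = y n - row_base z y n"
  have "n \<in> {1..N} \<longrightarrow> lpp_row z r n = y n" for n
    by (induction n) (use h in \<open>auto simp: row_base_def\<close>)
  then show "\<forall>n\<in>{1..N}. lpp_row z r n = y n" by blast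
qed

lemma prob_lpp_row:
  assumes "0 < q" "q < 1"
  shows "measure_pmf.prob (Pi_pmf ({i} \<times> {1..N}) 0 (\<lambda>_. geometric_pmf (1 - q)))
           {g. \<forall>n\<in>{1..N}. lpp_row z (\<lambda>j. g (i, j)) n = y n} = row_transition q N z y"
proof -
  let ?S = "\<lambda>p. {v::nat. int v = y (snd p) - row_base z y (snd p)}"
  let ?P = "\<lambda>n. if row_base z y n \<le> y n then (1 - q) * q ^ nat (y n - row_base z y n) else 0"
  have event: "{g. \<forall>n\<in>{1..N}. lpp_row z (\<lambda>j. g (i, j)) n = y n} = Pi ({i} \<times> {1..N}) ?S"
    unfolding lpp_row_eq_iff by (auto simp: Pi_def)
  have factor: "measure_pmf.prob (geometric_pmf (1 - q)) (?S p) = ?P (snd p)" for p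
  proof (cases "row_base z y (snd p) \<le> y (snd p)")
    case True
    then have "?S p = {nat (y (snd p) - row_base z y (snd p))}" by auto
    then show ?thesis using True assms by (simp add: measure_pmf_single pmf_geometric)
  qed auto
  have "measure_pmf.prob (Pi_pmf ({i} \<times> {1..N}) 0 (\<lambda>_. geometric_pmf (1 - q)))
      (Pi ({i} \<times> {1..N}) ?S) = (\<Prod>p\<in>{i} \<times> {1..N}. ?P (snd p))"
    by (subst measure_Pi_pmf_Pi) (simp_all only: factor finite_SigmaI finite.intros finite_atLeastAtMost)
  also have "\<dots> = row_transition q N z y"
    unfolding row_transition_def
    by (rule prod.reindex_bij_witness[of _ "\<lambda>n. (i, n)" snd]) auto
  finally show ?thesis unfolding event .
qed

lemma measure_pmf_prob_pair_Times:
  "measure_pmf.prob (pair_pmf M1 M2) (S \<times> T) = measure_pmf.prob M1 S * measure_pmf.prob M2 T"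
proof -
  have "measure_pmf.prob (pair_pmf M1 M2) (S \<times> T)
      = measure_pmf.prob (pair_pmf M1 M2) ((S \<inter> set_pmf M1) \<times> (T \<inter> set_pmf M2))"
    by (subst measure_Int_set_pmf[symmetric]) (simp add: Times_Int_Times)
  also have "\<dots> = measure_pmf.prob M1 (S \<inter> set_pmf M1) * measure_pmf.prob M2 (T \<inter> set_pmf M2)"
    by (rule measure_pmf_prob_product) (auto intro: countable_Int2)
  finally show ?thesis by (simp add: measure_Int_set_pmf)
qed

definition lpp_prob :: "real \<Rightarrow> nat \<Rightarrow> nat \<Rightarrow> (nat \<Rightarrow> int) \<Rightarrow> (nat \<Rightarrow> int) \<Rightarrow> real" where
  "lpp_prob q m N x y = measure_pmf.prob (weights q m N) {\<omega>. \<forall>n\<in>{1..N}. LPP \<omega> x m n = y n}"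

definition merge_weights ::
    "nat \<Rightarrow> nat \<Rightarrow> (nat \<times> nat \<Rightarrow> nat) \<times> (nat \<times> nat \<Rightarrow> nat) \<Rightarrow> nat \<times> nat \<Rightarrow> nat" where
  "merge_weights m N = (\<lambda>(f, g) p. if p \<in> {1..m} \<times> {1..N} then f p else g p)"

lemma weights_Suc:
  "weights q (Suc m) N = map_pmf (merge_weights m N)
     (pair_pmf (weights q m N) (Pi_pmf ({Suc m} \<times> {1..N}) 0 (\<lambda>_. geometric_pmf (1 - q))))"
proof -
  have "{1..Suc m} \<times> {1..N} = {1..m} \<times> {1..N} \<union> {Suc m} \<times> {1..N}" by auto
  then show ?thesis
    unfolding weights_def merge_weights_def by (simp only:) (rule Pi_pmf_union; auto)
qed

lemma LPP_merge_weights: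
  assumes "n \<le> N"
  shows "LPP (merge_weights m N (f, g)) x (Suc m) n = lpp_row (LPP f x m) (\<lambda>j. g (Suc m, j)) n"
  unfolding LPP_Suc
proof (rule lpp_row_cong)
  fix j assume j: "1 \<le> j" "j \<le> n"
  have "LPP (merge_weights m N (f, g)) x m j = LPP f x m j"
    by (rule LPP_cong) (use j assms in \<open>auto simp: merge_weights_def\<close>)
  then show "LPP (merge_weights m N (f, g)) x m j = LPP f x m j
      \<and> merge_weights m N (f, g) (Suc m, j) = g (Suc m, j)"
    by (simp add: merge_weights_def)
qed

lemma vimage_merge_weights_LPP_event:
  "merge_weights m N -` {\<omega>. \<forall>n\<in>{1..N}. LPP \<omega> x (Suc m) n = y n}
    = (\<Union>z\<in>PiE_dflt {1..N} 0 (\<lambda>n. {x n..y n}).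
         {f. \<forall>n\<in>{1..N}. LPP f x m n = z n} \<times> {g. \<forall>n\<in>{1..N}. lpp_row z (\<lambda>j. g (Suc m, j)) n = y n})"
  (is "?E = (\<Union>z\<in>?Z. ?A z \<times> ?B z)")
proof (intro equalityI subsetI)
  fix fg assume "fg \<in> ?E"
  then obtain f g where fg: "fg = (f, g)" and
    g: "\<forall>n\<in>{1..N}. lpp_row (LPP f x m) (\<lambda>j. g (Suc m, j)) n = y n"
    by (cases fg) (auto simp: LPP_merge_weights)
  define z where "z n = (if n \<in> {1..N} then LPP f x m n else 0)" for n
  have "lpp_row z (\<lambda>j. g (Suc m, j)) n = lpp_row (LPP f x m) (\<lambda>j. g (Suc m, j)) n" if "n \<le> N" for n
    by (rule lpp_row_cong) (use that in \<open>auto simp: z_def\<close>)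
  then have "g \<in> ?B z" using g by auto
  moreover have "x n \<le> LPP f x m n \<and> LPP f x m n \<le> y n" if "n \<in> {1..N}" for n
    using that g LPP_ge_initial[of n x f m] lpp_row_ge[of n "LPP f x m" "\<lambda>j. g (Suc m, j)"] by auto
  then have "z \<in> ?Z" by (auto simp: z_def PiE_dflt_def)
  moreover have "f \<in> ?A z" by (simp add: z_def)
  ultimately show "fg \<in> (\<Union>z\<in>?Z. ?A z \<times> ?B z)" using fg by blast
next
  fix fg assume "fg \<in> (\<Union>z\<in>?Z. ?A z \<times> ?B z)"
  then obtain z f g where f: "f \<in> ?A z" and g: "g \<in> ?B z" and fg: "fg = (f, g)" by auto
  have "lpp_row (LPP f x m) (\<lambda>j. g (Suc m, j)) n = lpp_row z (\<lambda>j. g (Suc m, j)) n" if "n \<le> N" for n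
    by (rule lpp_row_cong) (use that f in auto)
  then show "fg \<in> ?E" using g fg by (auto simp: LPP_merge_weights)
qed

lemma lpp_prob_Suc:
  assumes "0 < q" "q < 1"
  shows "lpp_prob q (Suc m) N x y
    = (\<Sum>z\<in>PiE_dflt {1..N} 0 (\<lambda>n. {x n..y n}). lpp_prob q m N x z * row_transition q N z y)"
proof -
  let ?Z = "PiE_dflt {1..N} 0 (\<lambda>n. {x n..y n})"
  let ?A = "\<lambda>z. {f. \<forall>n\<in>{1..N}. LPP f x m n = z n}"
  let ?B = "\<lambda>z. {g. \<forall>n\<in>{1..N}. lpp_row z (\<lambda>j. g (Suc m, j)) n = y n}"
  let ?M = "pair_pmf (weights q m N) (Pi_pmf ({Suc m} \<times> {1..N}) 0 (\<lambda>_. geometric_pmf (1 - q)))"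
  have "disjoint_family_on (\<lambda>z. ?A z \<times> ?B z) ?Z"
    unfolding disjoint_family_on_def
  proof (intro ballI impI)
    fix z z' assume z: "z \<in> ?Z" and z': "z' \<in> ?Z" and "z \<noteq> z'"
    then obtain n where n: "z n \<noteq> z' n" by auto
    have "n \<in> {1..N}"
    proof (rule ccontr)
      assume "n \<notin> {1..N}"
      then have "z n = 0" "z' n = 0" using z z' by (auto simp: PiE_dflt_def)
      with n show False by simp
    qed
    then show "(?A z \<times> ?B z) \<inter> (?A z' \<times> ?B z') = {}" using n by auto
  qed
  moreover have "finite ?Z" by (rule finite_PiE_dflt) auto
  ultimately have "lpp_prob q (Suc m) N x y = (\<Sum>z\<in>?Z. measure_pmf.prob ?M (?A z \<times> ?B z))"
    unfolding lpp_prob_def weights_Suc measure_map_pmf vimage_merge_weights_LPP_event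
    by (intro measure_pmf.finite_measure_finite_Union) auto
  also have "\<dots> = (\<Sum>z\<in>?Z. lpp_prob q m N x z * row_transition q N z y)"
    unfolding measure_pmf_prob_pair_Times prob_lpp_row[OF assms] lpp_prob_def ..
  finally show ?thesis .
qed

lemma lpp_prob_0: "lpp_prob q 0 N x z = (if \<forall>n\<in>{1..N}. z n = x n then 1 else 0)"
proof -
  have "weights q 0 N = return_pmf (\<lambda>_. 0)" by (simp add: weights_def)
  then show ?thesis by (auto simp: lpp_prob_def indicator_def)
qed

lemma lpp_prob_eq_0_if_not_weyl:
  assumes "weyl N x" "\<not> weyl N z"
  shows "lpp_prob q m N x z = 0"
proof -
  have "weyl N z" if "\<forall>n\<in>{1..N}. LPP \<omega> x m n = z n" for \<omega>
    using weyl_LPP[OF assms(1), of \<omega> m] that by (auto simp: weyl_def)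
  then have empty: "{\<omega>. \<forall>n\<in>{1..N}. LPP \<omega> x m n = z n} = {}"
    using assms(2) by blast
  show ?thesis unfolding lpp_prob_def empty by simp
qed

lemma lpp_prob_eq_0_if_below_initial:
  assumes "n \<in> {1..N}" "z n < x n"
  shows "lpp_prob q m N x z = 0"
proof -
  have "LPP \<omega> x m n \<noteq> z n" for \<omega>
    using assms LPP_ge_initial[of n x \<omega> m] by auto
  then have empty: "{\<omega>. \<forall>n\<in>{1..N}. LPP \<omega> x m n = z n} = {}"
    using assms(1) by blast
  show ?thesis unfolding lpp_prob_def empty by simp
qed

section \<open>The determinantal transition probabilities\<close>

definition chain_lower :: "int \<Rightarrow> (nat \<Rightarrow> int) \<Rightarrow> nat \<Rightarrow> int" where
  "chain_lower L z n = (if n = 1 then L else z (n - 1))"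

definition dominated_chains :: "int \<Rightarrow> (nat \<Rightarrow> int) \<Rightarrow> nat \<Rightarrow> (nat \<Rightarrow> int) set" where
  "dominated_chains L y k =
    {z. (\<forall>n. n \<notin> {1..k} \<longrightarrow> z n = 0) \<and> (\<forall>n\<in>{1..k}. chain_lower L z n \<le> z n \<and> z n \<le> y n)}"

lemma dominated_chains_0: "dominated_chains L y 0 = {\<lambda>_. 0}"
  by (auto simp: dominated_chains_def fun_eq_iff)

lemma dominated_chains_Suc:
  "dominated_chains L y (Suc k)
    = (\<lambda>(z, u). z(Suc k := u)) ` (SIGMA z:dominated_chains L y k. {chain_lower L z (Suc k)..y (Suc k)})"
proof (intro equalityI subsetI)
  fix z assume z: "z \<in> dominated_chains L y (Suc k)"
  let ?z0 = "z(Suc k := 0)"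
  have "chain_lower L ?z0 n = chain_lower L z n" if "n \<in> {1..Suc k}" for n
    using that by (auto simp: chain_lower_def)
  then have "?z0 \<in> dominated_chains L y k" "z (Suc k) \<in> {chain_lower L ?z0 (Suc k)..y (Suc k)}"
    using z by (auto simp: dominated_chains_def)
  moreover have "z = ?z0(Suc k := z (Suc k))" by simp
  ultimately show "z \<in> (\<lambda>(z, u). z(Suc k := u)) ` (SIGMA z:dominated_chains L y k. {chain_lower L z (Suc k)..y (Suc k)})"
    by (intro image_eqI[of _ _ "(?z0, z (Suc k))"]) auto
next
  fix z' assume "z' \<in> (\<lambda>(z, u). z(Suc k := u)) ` (SIGMA z:dominated_chains L y k. {chain_lower L z (Suc k)..y (Suc k)})"
  then obtain z u where z: "z \<in> dominated_chains L y k" and u: "u \<in> {chain_lower L z (Suc k)..y (Suc k)}"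
    and z': "z' = z(Suc k := u)"
    by auto
  have "chain_lower L z' n = chain_lower L z n" if "n \<in> {1..Suc k}" for n
    using that z' by (auto simp: chain_lower_def)
  then show "z' \<in> dominated_chains L y (Suc k)"
    using z u z' by (auto simp: dominated_chains_def le_Suc_eq)
qed

lemma finite_dominated_chains: "finite (dominated_chains L y k)"
  by (induction k) (simp_all add: dominated_chains_0 dominated_chains_Suc)

lemma sum_dominated_chains_Suc:
  "(\<Sum>z\<in>dominated_chains L y (Suc k). h z)
    = (\<Sum>z\<in>dominated_chains L y k. \<Sum>u\<in>{chain_lower L z (Suc k)..y (Suc k)}. h (z(Suc k := u)))"
proof -
  let ?S = "SIGMA z:dominated_chains L y k. {chain_lower L z (Suc k)..y (Suc k)}"
  have "inj_on (\<lambda>(z, u). z(Suc k := u)) ?S"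
  proof (rule inj_onI, clarsimp)
    fix z z' u u'
    assume z: "z \<in> dominated_chains L y k" and z': "z' \<in> dominated_chains L y k"
      and eq: "z(Suc k := u) = z'(Suc k := u')"
    have "z n = z' n" for n
      using z z' fun_cong[OF eq, of n] by (cases "n = Suc k") (auto simp: dominated_chains_def)
    then show "z = z' \<and> u = u'" using fun_cong[OF eq, of "Suc k"] by auto
  qed
  then have "(\<Sum>z\<in>dominated_chains L y (Suc k). h z) = (\<Sum>(z, u)\<in>?S. h (z(Suc k := u)))"
    unfolding dominated_chains_Suc by (simp add: sum.reindex split_def)
  also have "\<dots> = (\<Sum>z\<in>dominated_chains L y k. \<Sum>u\<in>{chain_lower L z (Suc k)..y (Suc k)}. h (z(Suc k := u)))"
    by (rule sum.Sigma[symmetric]) (auto simp: finite_dominated_chains)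
  finally show ?thesis .
qed

lemma dominated_chains_eq:
  "dominated_chains L y k = {z \<in> PiE_dflt {1..k} 0 (\<lambda>n. {L..y n}). weyl k z}"
proof (intro equalityI subsetI)
  fix z assume z: "z \<in> dominated_chains L y k"
  then have bounds: "chain_lower L z n \<le> z n" "z n \<le> y n" if "n \<in> {1..k}" for n
    using that by (auto simp: dominated_chains_def)
  have "L \<le> z n" if "n \<in> {1..k}" for n
    using that
  proof (induction n)
    case (Suc n)
    then show ?case using bounds(1)[OF Suc.prems] by (cases "n = 0") (auto simp: chain_lower_def)
  qed simp
  moreover have "weyl k z"
    unfolding weyl_def
  proof (intro allI impI)
    fix i j assume ij: "1 \<le> i" "i \<le> j" "j \<le> k"
    show "z i \<le> z j"
      using ij(2)
    proof (induction j rule: dec_induct)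
      case (step n)
      then have "chain_lower L z (Suc n) \<le> z (Suc n)" using ij by (intro bounds) auto
      then show ?case using step ij by (simp add: chain_lower_def)
    qed simp
  qed
  ultimately show "z \<in> {z \<in> PiE_dflt {1..k} 0 (\<lambda>n. {L..y n}). weyl k z}"
    using z bounds by (auto simp: dominated_chains_def PiE_dflt_def)
next
  fix z assume z: "z \<in> {z \<in> PiE_dflt {1..k} 0 (\<lambda>n. {L..y n}). weyl k z}"
  have "chain_lower L z n \<le> z n" if "n \<in> {1..k}" for n
    using z that weylD[of k z "n - 1" n] by (auto simp: PiE_dflt_def chain_lower_def)
  then show "z \<in> dominated_chains L y k"
    using z by (auto simp: dominated_chains_def PiE_dflt_def)
qed

text \<open>Summation by parts; the boundary term is a multiple of the row \<open>M k' = C z\<close> and drops out.\<close>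
lemma det_fun_update_row_capped_sum:
  fixes M :: "nat \<Rightarrow> nat \<Rightarrow> real" and C :: "int \<Rightarrow> nat \<Rightarrow> real"
  assumes "k < N" "k' < N" "k \<noteq> k'" and row: "M k' = C z"
    and C: "\<And>b. b < N \<Longrightarrow> vanishes_below (\<lambda>u. C u b) (L + 1)"
    and "L \<le> z" "z \<le> Y'" "Y' \<le> Y"
  shows "det_fun N (M(k := \<lambda>b. \<Sum>u\<in>{z..Y}. q ^ nat (Y - max u Y') * (C (u + 1) b - C u b)))
       = det_fun N (M(k := \<lambda>b. geom_sum q L (\<lambda>u. C (u + 1) b - C u b) Y
                              + (1 - q) * q ^ nat (Y - Y') * geom_sum q L (\<lambda>u. C u b) Y'))"
    (is "_ = det_fun N (M(k := ?R))")
proof -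
  let ?\<alpha> = "q ^ nat (Y - Y')"
  have "det_fun N (M(k := \<lambda>b. \<Sum>u\<in>{z..Y}. q ^ nat (Y - max u Y') * (C (u + 1) b - C u b)))
      = det_fun N (M(k := \<lambda>b. 1 * ?R b + (- ?\<alpha>) * C z b))"
    using sum_pow_max_diff[OF C assms(6-8)] by (intro det_fun_cong) (simp add: algebra_simps)
  also have "\<dots> = 1 * det_fun N (M(k := ?R)) + (- ?\<alpha>) * det_fun N (M(k := C z))"
    by (rule det_fun_row_linear[OF assms(1)])
  also have "det_fun N (M(k := C z)) = 0"
    by (rule det_fun_identical_rows[of k N k']) (use assms in auto)
  finally show ?thesis by (simp only: mult_1 mult_zero_right add_0_right)
qed

lemma sum_dominated_chains_Suc_det:
  fixes c :: "nat \<Rightarrow> int \<Rightarrow> nat \<Rightarrow> real"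
  assumes "k < N"
  shows "(\<Sum>z\<in>dominated_chains L y (Suc k). (\<Prod>n\<in>{1..Suc k}. q ^ nat (y n - row_base z y n))
            * det_fun N (\<lambda>a. if a < Suc k then c a (z (Suc a)) else A a))
       = (\<Sum>z\<in>dominated_chains L y k. (\<Prod>n\<in>{1..k}. q ^ nat (y n - row_base z y n))
            * det_fun N ((\<lambda>a. if a < k then c a (z (Suc a)) else A a)(k := \<lambda>b.
                \<Sum>u\<in>{chain_lower L z (Suc k)..y (Suc k)}.
                  q ^ nat (y (Suc k) - row_base (z(Suc k := u)) y (Suc k)) * c k u b)))"
  (is "_ = (\<Sum>z\<in>_. ?W z * det_fun N ((?M z)(k := ?V z)))")
proof -
  let ?p = "\<lambda>z u. q ^ nat (y (Suc k) - row_base (z(Suc k := u)) y (Suc k))"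
  have weight: "(\<Prod>n\<in>{1..Suc k}. q ^ nat (y n - row_base (z(Suc k := u)) y n)) = ?W z * ?p z u" for z u
  proof -
    have "(\<Prod>n\<in>{1..k}. q ^ nat (y n - row_base (z(Suc k := u)) y n)) = ?W z"
      by (rule prod.cong) (auto simp: row_base_def)
    then show ?thesis by (simp add: atLeastAtMostSuc_conv)
  qed
  have rows: "(\<lambda>a. if a < Suc k then c a ((z(Suc k := u)) (Suc a)) else A a) = (?M z)(k := c k u)" for z u
    by (rule ext) auto
  have inner: "(\<Sum>u\<in>{chain_lower L z (Suc k)..y (Suc k)}.
        (\<Prod>n\<in>{1..Suc k}. q ^ nat (y n - row_base (z(Suc k := u)) y n))
        * det_fun N (\<lambda>a. if a < Suc k then c a ((z(Suc k := u)) (Suc a)) else A a))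
      = ?W z * det_fun N ((?M z)(k := ?V z))" for z
    unfolding weight rows
    by (simp add: det_fun_row_sum[OF assms] det_fun_row_scale[OF assms] sum_distrib_left mult.assoc)
  show ?thesis
    unfolding sum_dominated_chains_Suc inner ..
qed

text \<open>Summing out \<open>z\<^sub>k\<close> leaves row \<open>k\<close> equal to its geometric sum plus a multiple of the geometric
  sum of row \<open>k - 1\<close>. The induction hypothesis turns row \<open>k - 1\<close> into that same geometric sum,
  so a row operation removes the extra term.\<close>
lemma sum_dominated_chains_det:
  fixes c :: "nat \<Rightarrow> int \<Rightarrow> nat \<Rightarrow> real"
  assumes c_vanish: "\<And>a b. a < N \<Longrightarrow> b < N \<Longrightarrow> vanishes_below (\<lambda>u. c a u b) (L + 1)"
    and c_Suc: "\<And>a u b. c (Suc a) u b = c a (u + 1) b - c a u b"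
    and y: "weyl N y" and "k \<le> N"
  shows "(\<Sum>z\<in>dominated_chains L y k. (\<Prod>n\<in>{1..k}. q ^ nat (y n - row_base z y n))
            * det_fun N (\<lambda>a. if a < k then c a (z (Suc a)) else A a))
       = det_fun N (\<lambda>a. if a < k then (\<lambda>b. geom_sum q L (\<lambda>u. c a u b) (y (Suc a))) else A a)"
  using \<open>k \<le> N\<close>
proof (induction k arbitrary: A)
  case 0
  then show ?case by (simp add: dominated_chains_0)
next
  case (Suc k)
  let ?R = "\<lambda>a b. geom_sum q L (\<lambda>u. c a u b) (y (Suc a))"
  let ?M = "\<lambda>z a. if a < k then c a (z (Suc a)) else A a"
  have kN: "k < N" using Suc.prems by simp
  note chains_Suc = sum_dominated_chains_Suc_det[OF kN, where c = c and A = A]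
  show ?case
  proof (cases k)
    case 0
    have "(?M z)(k := \<lambda>b. \<Sum>u\<in>{chain_lower L z (Suc k)..y (Suc k)}.
          q ^ nat (y (Suc k) - row_base (z(Suc k := u)) y (Suc k)) * c k u b)
        = (\<lambda>a. if a < Suc k then ?R a else A a)" for z
      by (rule ext) (simp add: 0 chain_lower_def row_base_def geom_sum_def)
    then show ?thesis unfolding chains_Suc by (simp add: 0 dominated_chains_0)
  next
    case (Suc k')
    let ?R' = "\<lambda>b. ?R k b + (1 - q) * q ^ nat (y (Suc k) - y k) * ?R k' b"
    have "det_fun N ((?M z)(k := \<lambda>b. \<Sum>u\<in>{chain_lower L z (Suc k)..y (Suc k)}.
          q ^ nat (y (Suc k) - row_base (z(Suc k := u)) y (Suc k)) * c k u b))
        = det_fun N (\<lambda>a. if a < k then c a (z (Suc a)) else (A(k := ?R')) a)"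
      if z: "z \<in> dominated_chains L y k" for z
    proof -
      have "L \<le> z k" "z k \<le> y k" "y k \<le> y (Suc k)"
        using z Suc kN y by (auto simp: dominated_chains_eq PiE_dflt_def intro: weylD)
      then have "det_fun N ((?M z)(k := \<lambda>b. \<Sum>u\<in>{z k..y (Suc k)}.
          q ^ nat (y (Suc k) - max u (y k)) * (c k' (u + 1) b - c k' u b))) = det_fun N ((?M z)(k := ?R'))"
        using Suc kN by (subst det_fun_update_row_capped_sum[where k' = k']) (auto simp: c_vanish c_Suc)
      moreover have "(?M z)(k := ?R') = (\<lambda>a. if a < k then c a (z (Suc a)) else (A(k := ?R')) a)"
        by (rule ext) auto
      ultimately show ?thesis using Suc by (simp add: chain_lower_def row_base_def c_Suc)
    qed
    then have "(\<Sum>z\<in>dominated_chains L y (Suc k). (\<Prod>n\<in>{1..Suc k}. q ^ nat (y n - row_base z y n))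
            * det_fun N (\<lambda>a. if a < Suc k then c a (z (Suc a)) else A a))
        = det_fun N (\<lambda>a. if a < k then ?R a else (A(k := ?R')) a)"
      unfolding chains_Suc using Suc.IH kN by (simp cong: sum.cong)
    also have "(\<lambda>a. if a < k then ?R a else (A(k := ?R')) a)
        = (\<lambda>a. if a < Suc k then ?R a else A a)(k := \<lambda>b.
            (\<lambda>a. if a < Suc k then ?R a else A a) k b
            + (1 - q) * q ^ nat (y (Suc k) - y k) * (\<lambda>a. if a < Suc k then ?R a else A a) k' b)"
      by (rule ext) (simp add: Suc)
    also have "det_fun N \<dots> = det_fun N (\<lambda>a. if a < Suc k then ?R a else A a)"
      by (rule det_fun_row_add) (use kN Suc in auto)
    finally show ?thesis .
  qed
qed

lemma det_fun_nabla_pow_indicator: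
  assumes "weyl n x" "weyl n z"
  shows "det_fun n (\<lambda>a b. nabla_pow (indicator {0}) (int a - int b) (z (Suc a) - x (Suc b)))
       = (if \<forall>i\<in>{1..n}. z i = x i then 1 else 0)"
  using assms
proof (induction n)
  case 0
  then show ?case by (simp add: det_fun_def)
next
  case (Suc n)
  let ?E = "\<lambda>a b. nabla_pow (indicator {0}) (int a - int b) (z (Suc a) - x (Suc b))"
  have \<delta>: "vanishes_below (indicator {0}) 0" "\<And>t::int. 0 < t \<Longrightarrow> indicator {0} t = (0::real)"
    by (auto simp: vanishes_below_def)
  have x: "b < Suc n \<Longrightarrow> x (Suc b) \<le> x (Suc n)" and z: "a < Suc n \<Longrightarrow> z (Suc a) \<le> z (Suc n)" for a b
    using Suc.prems by (auto simp: weyl_def)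
  show ?case
  proof (cases "x (Suc n) < z (Suc n)")
    case True
    have "det_fun (Suc n) ?E = 0"
    proof (rule det_fun_zero_row[of n])
      fix j assume "j < Suc n"
      then show "?E n j = 0" using x[of j] True by (intro nabla_pow_nonneg_eq_0_pos \<delta>) auto
    qed simp
    moreover have "\<not> (\<forall>i\<in>{1..Suc n}. z i = x i)" using True by force
    ultimately show ?thesis by simp
  next
    case False
    have "det_fun (Suc n) ?E = ?E n n * det_fun n ?E"
    proof (rule det_fun_Suc_last_column)
      fix i assume "i < n"
      then show "?E i n = 0" using z[of i] False by (intro nabla_pow_neg_eq_0_nonpos \<delta>) auto
    qed
    moreover have "det_fun n ?E = (if \<forall>i\<in>{1..n}. z i = x i then 1 else 0)"
      using Suc by (simp add: weyl_def)
    moreover have "(\<forall>i\<in>{1..Suc n}. z i = x i) \<longleftrightarrow> (\<forall>i\<in>{1..n}. z i = x i) \<and> z (Suc n) = x (Suc n)"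
      by (auto simp: atLeastAtMostSuc_conv)
    ultimately show ?thesis by simp
  qed
qed

definition lpp_det :: "real \<Rightarrow> nat \<Rightarrow> nat \<Rightarrow> (nat \<Rightarrow> int) \<Rightarrow> (nat \<Rightarrow> int) \<Rightarrow> real" where
  "lpp_det q m N x y = det_fun N (\<lambda>a b. nabla_pow (walk_dist q m) (int a - int b) (y (Suc a) - x (Suc b)))"

lemma lpp_prob_0_eq_lpp_det:
  assumes "weyl N x" "weyl N y"
  shows "lpp_prob q 0 N x y = lpp_det q 0 N x y"
  using det_fun_nabla_pow_indicator[OF assms] by (simp add: lpp_prob_0 lpp_det_def walk_dist_def)

lemma lpp_prob_Suc_dominated_chains:
  assumes "0 < q" "q < 1" "weyl N x" "L \<le> x 1"
  shows "lpp_prob q (Suc m) N x y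
    = (\<Sum>z\<in>dominated_chains L y N. lpp_prob q m N x z * row_transition q N z y)"
proof -
  let ?f = "\<lambda>z. lpp_prob q m N x z * row_transition q N z y"
  let ?Z = "PiE_dflt {1..N} 0 (\<lambda>n. {x n..y n})"
  let ?B = "PiE_dflt {1..N} 0 (\<lambda>n. {L..y n})"
  have B: "finite ?B" by (rule finite_PiE_dflt) auto
  have "L \<le> x n" if "n \<in> {1..N}" for n
    using that assms(4) weylD[OF assms(3), of 1 n] by simp
  then have "?Z \<subseteq> ?B" by (force simp: PiE_dflt_def)
  moreover have "?f z = 0" if "z \<in> ?B - ?Z" for z
  proof -
    have "\<not> (\<forall>n\<in>{1..N}. x n \<le> z n)"
      using that by (auto simp: PiE_dflt_def)
    then obtain n where "n \<in> {1..N}" "z n < x n" by auto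
    then show ?thesis by (simp add: lpp_prob_eq_0_if_below_initial)
  qed
  ultimately have "(\<Sum>z\<in>?Z. ?f z) = (\<Sum>z\<in>?B. ?f z)"
    by (intro sum.mono_neutral_left B) auto
  also have "\<dots> = (\<Sum>z\<in>dominated_chains L y N. ?f z)"
    using lpp_prob_eq_0_if_not_weyl[OF assms(3)]
    by (intro sum.mono_neutral_right B) (auto simp: dominated_chains_eq)
  finally show ?thesis using lpp_prob_Suc[OF assms(1,2)] by simp
qed

lemma row_transition_dominated_chain:
  assumes "weyl N y" "z \<in> dominated_chains L y N"
  shows "row_transition q N z y = (1 - q) ^ N * (\<Prod>n\<in>{1..N}. q ^ nat (y n - row_base z y n))"
proof -
  have "row_base z y n \<le> y n" if "n \<in> {1..N}" for n
    using that assms weylD[OF assms(1), of "n - 1" n]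
    by (auto simp: row_base_def dominated_chains_def)
  then have "row_transition q N z y = (\<Prod>n\<in>{1..N}. (1 - q) * q ^ nat (y n - row_base z y n))"
    unfolding row_transition_def by (intro prod.cong) auto
  then show ?thesis by (simp add: prod.distrib)
qed

theorem lpp_prob_eq_lpp_det:
  assumes q: "0 < q" "q < 1" and x: "weyl N x" and "weyl N y"
  shows "lpp_prob q m N x y = lpp_det q m N x y"
  using \<open>weyl N y\<close>
proof (induction m arbitrary: y)
  case 0
  then show ?case using lpp_prob_0_eq_lpp_det[OF x] by simp
next
  case (Suc m)
  define L where "L = x 1 - int N - 1"
  define c where "c a u b = nabla_pow (walk_dist q m) (int a - int b) (u - x (Suc b))" for a u b
  have x_bound: "L + int N < x (Suc b)" if "b < N" for b
    using weylD[OF x, of 1 "Suc b"] that by (simp add: L_def)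
  have c_vanish: "vanishes_below (\<lambda>u. c a u b) (L + 1)" if "a < N" "b < N" for a b
    unfolding c_def
    by (rule vanishes_below_mono[OF vanishes_below_nabla_pow_walk_dist])
      (use x_bound[OF that(2)] that in \<open>auto simp: min_def\<close>)
  have c_Suc: "c (Suc a) u b = c a (u + 1) b - c a u b" for a u b
    using nabla_pow_add_one[OF vanishes_below_walk_dist, of q m "int a - int b"]
    by (simp add: c_def nabla_def algebra_simps)
  have entry: "(1 - q) * geom_sum q L (\<lambda>u. c a u b) (y (Suc a))
      = nabla_pow (walk_dist q (Suc m)) (int a - int b) (y (Suc a) - x (Suc b))" if "a < N" "b < N" for a b
    using nabla_pow_walk_dist_Suc[of L "x (Suc b)" "int a - int b" q m "y (Suc a)"] x_bound[OF that(2)] that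
    by (simp add: c_def)
  have "lpp_prob q (Suc m) N x y = (\<Sum>z\<in>dominated_chains L y N. lpp_prob q m N x z * row_transition q N z y)"
    using lpp_prob_Suc_dominated_chains[OF q x] by (simp add: L_def)
  also have "\<dots> = (1 - q) ^ N * (\<Sum>z\<in>dominated_chains L y N. (\<Prod>n\<in>{1..N}. q ^ nat (y n - row_base z y n))
      * det_fun N (\<lambda>a. if a < N then c a (z (Suc a)) else (\<lambda>_. 0)))"
    unfolding sum_distrib_left
  proof (intro sum.cong refl)
    fix z assume z: "z \<in> dominated_chains L y N"
    then have "lpp_prob q m N x z = det_fun N (\<lambda>a. if a < N then c a (z (Suc a)) else (\<lambda>_. 0))"
      using Suc.IH by (auto simp: dominated_chains_eq lpp_det_def c_def intro: det_fun_cong)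
    then show "lpp_prob q m N x z * row_transition q N z y = (1 - q) ^ N * ((\<Prod>n\<in>{1..N}. q ^ nat (y n - row_base z y n))
      * det_fun N (\<lambda>a. if a < N then c a (z (Suc a)) else (\<lambda>_. 0)))"
      using row_transition_dominated_chain[OF Suc.prems z] by simp
  qed
  also have "\<dots> = (1 - q) ^ N * det_fun N (\<lambda>a. if a < N then (\<lambda>b. geom_sum q L (\<lambda>u. c a u b) (y (Suc a))) else (\<lambda>_. 0))"
    using sum_dominated_chains_det[where c = c and L = L and N = N and y = y and k = N and q = q
        and A = "\<lambda>_ _. 0", OF c_vanish c_Suc Suc.prems order_refl]
    by simp
  also have "\<dots> = lpp_det q (Suc m) N x y"
    unfolding lpp_det_def det_fun_smult[symmetric] by (rule det_fun_cong) (simp add: entry)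
  finally show ?case .
qed

lemma F_tilde_eq_nabla_pow:
  assumes "1 \<le> m" "i < N" "j < N"
  shows "F q m (int i - int j) (tilde y (N - i) - tilde x (N - j))
    = nabla_pow (walk_dist q m) (int (N - 1 - i) - int (N - 1 - j)) (y (Suc (N - 1 - i)) - x (Suc (N - 1 - j)))"
proof -
  have "walk_dist q m = w q m" using assms(1) by (simp add: walk_dist_def)
  moreover have "int (N - 1 - i) - int (N - 1 - j) = - (int i - int j)"
    "Suc (N - 1 - i) = N - i" "Suc (N - 1 - j) = N - j" using assms by auto
  moreover have "(int i - int j) - (tilde y (N - i) - tilde x (N - j)) = y (N - i) - x (N - j)"
    using assms by (simp add: tilde_def of_nat_diff)
  ultimately show ?thesis by (simp only: F_def H_eq_nabla_pow)
qed

theorem proposition1: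
  fixes q :: real and N m :: nat and x y :: "nat \<Rightarrow> int"
  assumes "0 < q" and "q < 1" and "1 \<le> N" and "1 \<le> m"
    and "weyl N x" and "weyl N y"
  shows "measure_pmf.prob (weights q m N) {\<omega>. \<forall>n\<in>{1..N}. LPP \<omega> x m n = y n}
         = det (mat N N (\<lambda>(i, j). F q m (int i - int j)
                   (tilde y (N - i) - tilde x (N - j))))"
proof -
  have "det (mat N N (\<lambda>(i, j). F q m (int i - int j) (tilde y (N - i) - tilde x (N - j))))
      = det_fun N (\<lambda>i j. nabla_pow (walk_dist q m) (int (N - 1 - i) - int (N - 1 - j))
                          (y (Suc (N - 1 - i)) - x (Suc (N - 1 - j))))"
    unfolding det_fun_def[symmetric] by (rule det_fun_cong) (rule F_tilde_eq_nabla_pow[OF assms(4)])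
  also have "\<dots> = lpp_det q m N x y"
    unfolding lpp_det_def by (rule det_fun_reverse)
  also have "\<dots> = lpp_prob q m N x y"
    using lpp_prob_eq_lpp_det[OF assms(1,2,5,6)] by simp
  finally show ?thesis by (simp add: lpp_prob_def)
qed

end
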